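(* Let $X$ be a Polish space and $\mathbf f=(f_n)_n$ a sequence of continuous real-valued functions on $X$ which is relatively compact in $\mathcal B_1(X)$. Then for every $L\in[\mathbb N]$: $L\in\mathcal L_{\mathbf f}$ if and only if the tree $T_L$ is well-founded.
   Context: $\mathcal B_1(X)$ is the set of real-valued Baire-1 functions on $X$; $(f_n)_n$ is relatively compact in $\mathcal B_1(X)$ if the closure of $\{f_n\}$ in $\mathbb R^X$ (pointwise topology) is compact and contained in $\mathcal B_1(X)$. $[\mathbb N]$ is the set of infinite subsets of $\mathbb N$; $\mathcal L_{\mathbf f}=\{L\in[\mathbb N]:(f_n)_{n\in L}\text{ converges pointwise}\}$. Fix a compatible complete metric on $X$, a countable dense $D\subseteq X$ and an enumeration $(B_n)_n$ of all closed balls with centers in $D$ and rational radii. A finite sequence $w=(l_0,\dots,l_k)\in\mathbb N^{<\mathbb N}$ is acceptable if $B_{l_0}\supseteq\dots\supseteq B_{l_k}$ and $\mathrm{diam}(B_{l_i})\le\frac1{i+1}$ for all $i$; the empty sequence is acceptable. $\mathrm{Fin}$ is the set of finite subsets of $\mathbb N$, $\mathrm{Fin}(L)$ those contained in $L$; $F<G$ means $\max F<\min G$. A tree on $\mathbb N\times\mathrm{Fin}\times\mathbb N$ is identified with a set of triples $(s,t,w)$ of finite sequences of equal length, closed under taking initial segments of equal length; it is well-founded if it has no infinite branch. For $d\in\mathbb N$ and $L\in[\mathbb N]$, $T^d_L$ is the set of $(s,t,w)$ with $|s|=|t|=|w|=k$ such that $s=(n_0<\dots<n_{k-1})$ with $n_i\in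 L$, $t=(F_0<\dots<F_{k-1})$ with $F_i\in\mathrm{Fin}(L)$, $w=(l_0,\dots,l_{k-1})$ acceptable, and for every $i<k$ and every $z\in B_{l_i}$ there is $m_i\in F_i$ with $|f_{n_i}(z)-f_{m_i}(z)|>\frac1{d+1}$. Then $T_L$ consists of the empty triple together with all $(d^\frown s',\{d\}^\frown t',d^\frown w')$ with $d\in\mathbb N$ and $(s',t',w')\in T^d_L$. *)

theory Defs
  imports "HOL-Analysis.Analysis"
begin

definition baire1 :: "('a::topological_space \<Rightarrow> real) \<Rightarrow> bool" where
  "baire1 g \<longleftrightarrow> (\<exists>h::nat \<Rightarrow> 'a \<Rightarrow> real. (\<forall>n. continuous_on UNIV (h n)) \<and>
      (\<forall>x. (\<lambda>n. h n x) \<longlonglongrightarrow> g x))"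

text \<open>Relative compactness in B1(X): closure of the range in the pointwise
  (product) topology of R^X is compact and consists of Baire-1 functions.\<close>
definition rel_compact_B1 :: "(nat \<Rightarrow> 'a::topological_space \<Rightarrow> real) \<Rightarrow> bool" where
  "rel_compact_B1 f \<longleftrightarrow> compact (closure (range f)) \<and> closure (range f) \<subseteq> {g. baire1 g}"

definition conv_set :: "(nat \<Rightarrow> 'a \<Rightarrow> real) \<Rightarrow> nat set set" where
  "conv_set f = {L. infinite L \<and> (\<forall>x. convergent (\<lambda>k. f (enumerate L k) x))}"

definition fin_less :: "nat set \<Rightarrow> nat set \<Rightarrow> bool" where
  "fin_less F G \<longleftrightarrow> (\<forall>a\<in>F. \<forall>b\<in>G. a < b)"

definition acceptable :: "(nat \<Rightarrow> 'a::metric_space set) \<Rightarrow> nat list \<Rightarrow> bool" where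
  "acceptable B w \<longleftrightarrow>
     (\<forall>i. Suc i < length w \<longrightarrow> B (w ! Suc i) \<subseteq> B (w ! i)) \<and>
     (\<forall>i < length w. diameter (B (w ! i)) \<le> 1 / (real i + 1))"

definition treeD ::
  "(nat \<Rightarrow> 'a::metric_space \<Rightarrow> real) \<Rightarrow> (nat \<Rightarrow> 'a set) \<Rightarrow> nat \<Rightarrow> nat set
   \<Rightarrow> (nat list \<times> nat set list \<times> nat list) set" where
  "treeD f B d L = {(s, t, w). length s = length t \<and> length t = length w \<and>
      sorted_wrt (<) s \<and> set s \<subseteq> L \<and>
      sorted_wrt fin_less t \<and> (\<forall>F\<in>set t. finite F \<and> F \<subseteq> L) \<and>
      acceptable B w \<and>
      (\<forall>i < length s. \<forall>z \<in> B (w ! i). \<exists>m \<in> t ! i.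
          \<bar>f (s ! i) z - f m z\<bar> > 1 / (real d + 1))}"

definition treeL ::
  "(nat \<Rightarrow> 'a::metric_space \<Rightarrow> real) \<Rightarrow> (nat \<Rightarrow> 'a set) \<Rightarrow> nat set
   \<Rightarrow> (nat list \<times> nat set list \<times> nat list) set" where
  "treeL f B L = {([], [], [])} \<union>
     {(d # s, {d} # t, d # w) | d s t w. (s, t, w) \<in> treeD f B d L}"

definition well_founded_tree :: "('a list \<times> 'b list \<times> 'c list) set \<Rightarrow> bool" where
  "well_founded_tree T \<longleftrightarrow> \<not> (\<exists>(\<sigma>::nat \<Rightarrow> 'a) (\<tau>::nat \<Rightarrow> 'b) (\<omega>::nat \<Rightarrow> 'c).
       \<forall>k. (map \<sigma> [0..<k], map \<tau> [0..<k], map \<omega> [0..<k]) \<in> T)"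

end

theory Submission
  imports Defs
begin

(* An infinite branch of T_L is a level d followed by an infinite branch of T^d_L,
   and the latter is described pointwise by the predicate treeD_branch: strictly
   increasing indices n_i in L, blocks F_0 < F_1 < ... in Fin(L), nested balls
   B_{l_i} of diameter <= 1/(i+1), and on B_{l_i} every point separates f_{n_i}
   from some f_m, m in F_i, by more than 1/(d+1)  (treeD_branch_iff,
   well_founded_treeL_iff).

   If (f_n)_{n in L} converges pointwise and such a branch exists, completeness
   gives a point z in all the balls; there the values f_{n_i}(z), f_{m_i}(z) with
   m_i in F_i are eventually 1/(d+1)-close, a contradiction (convergent_no_branch).
   Conversely, if the subsequence oscillates by more than 1/(d+1) at a point x,
   continuity of the f_n and the fact that the rational balls around points of D
   form a basis of arbitrarily small neighbourhoods let us build a branch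
   recursively with singleton blocks (oscillation_branch). *)

definition treeD_branch ::
  "(nat \<Rightarrow> 'a::metric_space \<Rightarrow> real) \<Rightarrow> (nat \<Rightarrow> 'a set) \<Rightarrow> nat \<Rightarrow> nat set
   \<Rightarrow> (nat \<Rightarrow> nat) \<Rightarrow> (nat \<Rightarrow> nat set) \<Rightarrow> (nat \<Rightarrow> nat) \<Rightarrow> bool" where
  "treeD_branch f B d L n F l \<longleftrightarrow>
     strict_mono n \<and> range n \<subseteq> L \<and>
     (\<forall>i j. i < j \<longrightarrow> fin_less (F i) (F j)) \<and> (\<forall>i. finite (F i) \<and> F i \<subseteq> L) \<and>
     (\<forall>i. B (l (Suc i)) \<subseteq> B (l i) \<and> diameter (B (l i)) \<le> 1 / (real i + 1)) \<and>
     (\<forall>i. \<forall>z \<in> B (l i). \<exists>m \<in> F i. 1 / (real d + 1) < \<bar>f (n i) z - f m z\<bar>)"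

lemma treeD_branch_iff:
  "(\<forall>k. (map n [0..<k], map F [0..<k], map l [0..<k]) \<in> treeD f B d L)
     \<longleftrightarrow> treeD_branch f B d L n F l"
proof
  assume "\<forall>k. (map n [0..<k], map F [0..<k], map l [0..<k]) \<in> treeD f B d L"
  note prefix = this[rule_format, unfolded treeD_def acceptable_def sorted_wrt_iff_nth_less]
  have prefix_facts: "i < k \<Longrightarrow> n i \<in> L \<and> finite (F i) \<and> F i \<subseteq> L \<and> diameter (B (l i)) \<le> 1 / (real i + 1) \<and>
     (\<forall>z \<in> B (l i). \<exists>m \<in> F i. 1 / (real d + 1) < \<bar>f (n i) z - f m z\<bar>) \<and>
     (Suc i < k \<longrightarrow> B (l (Suc i)) \<subseteq> B (l i)) \<and>
     (\<forall>j<i. n j < n i \<and> fin_less (F j) (F i))" for i k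
    using prefix[of k] by (auto simp: nth_map)
  show "treeD_branch f B d L n F l"
    unfolding treeD_branch_def strict_mono_def
  proof (intro conjI allI impI)
    fix i j :: nat assume "i < j"
    then show "n i < n j" "fin_less (F i) (F j)" using prefix_facts[of j "Suc j"] by auto
  next
    fix i :: nat
    show "finite (F i)" "F i \<subseteq> L" "diameter (B (l i)) \<le> 1 / (real i + 1)"
      "\<forall>z \<in> B (l i). \<exists>m \<in> F i. 1 / (real d + 1) < \<bar>f (n i) z - f m z\<bar>"
      using prefix_facts[of i "Suc i"] by auto
    show "B (l (Suc i)) \<subseteq> B (l i)" using prefix_facts[of i "Suc (Suc i)"] by auto
  next
    show "range n \<subseteq> L" using prefix_facts by blast
  qed
next
  assume "treeD_branch f B d L n F l"
  then show "\<forall>k. (map n [0..<k], map F [0..<k], map l [0..<k]) \<in> treeD f B d L"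
    unfolding treeD_branch_def treeD_def acceptable_def sorted_wrt_iff_nth_less strict_mono_def
    by (auto simp: nth_map)
qed

lemma well_founded_treeL_iff:
  "well_founded_tree (treeL f B L) \<longleftrightarrow> (\<nexists>d n F l. treeD_branch f B d L n F l)"
proof -
  have "(\<exists>\<sigma> \<tau> \<omega>. \<forall>k. (map \<sigma> [0..<k], map \<tau> [0..<k], map \<omega> [0..<k]) \<in> treeL f B L) \<longleftrightarrow>
        (\<exists>d n F l. \<forall>k. (map n [0..<k], map F [0..<k], map l [0..<k]) \<in> treeD f B d L)"
  proof
    assume "\<exists>\<sigma> \<tau> \<omega>. \<forall>k. (map \<sigma> [0..<k], map \<tau> [0..<k], map \<omega> [0..<k]) \<in> treeL f B L"
    then obtain \<sigma> \<tau> \<omega> where br: "\<forall>k. (map \<sigma> [0..<k], map \<tau> [0..<k], map \<omega> [0..<k]) \<in> treeL f B L"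
      by blast
    have "(map (\<lambda>i. \<sigma> (Suc i)) [0..<k], map (\<lambda>i. \<tau> (Suc i)) [0..<k], map (\<lambda>i. \<omega> (Suc i)) [0..<k])
            \<in> treeD f B (\<sigma> 0) L" for k
      using br[rule_format, of "Suc k"] unfolding treeL_def map_upt_Suc by auto
    then show "\<exists>d n F l. \<forall>k. (map n [0..<k], map F [0..<k], map l [0..<k]) \<in> treeD f B d L"
      by blast
  next
    assume "\<exists>d n F l. \<forall>k. (map n [0..<k], map F [0..<k], map l [0..<k]) \<in> treeD f B d L"
    then obtain d n F l where br: "\<forall>k. (map n [0..<k], map F [0..<k], map l [0..<k]) \<in> treeD f B d L"
      by blast
    have "(map (case_nat d n) [0..<k], map (case_nat {d} F) [0..<k], map (case_nat d l) [0..<k])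
            \<in> treeL f B L" for k
      using br by (cases k) (auto simp: treeL_def map_upt_Suc simp del: upt_Suc)
    then show "\<exists>\<sigma> \<tau> \<omega>. \<forall>k. (map \<sigma> [0..<k], map \<tau> [0..<k], map \<omega> [0..<k]) \<in> treeL f B L"
      by blast
  qed
  then show ?thesis
    unfolding well_founded_tree_def treeD_branch_iff by blast
qed


(* A pointwise distance bound bounds the diameter (library version is for normed spaces). *)
lemma diameter_le_metric:
  fixes S :: "'a::metric_space set"
  assumes "S \<noteq> {}" and "\<And>x y. x \<in> S \<Longrightarrow> y \<in> S \<Longrightarrow> dist x y \<le> \<delta>"
  shows "diameter S \<le> \<delta>"
  using assms by (auto simp: diameter_def intro!: cSUP_least)

lemma nested_common_point:
  fixes S :: "nat \<Rightarrow> 'a::complete_space set"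
  assumes closed: "\<And>i. closed (S i)" and nonempty: "\<And>i. S i \<noteq> {}"
    and bounded: "\<And>i. bounded (S i)" and nested: "\<And>i. S (Suc i) \<subseteq> S i"
    and diam: "\<And>i. diameter (S i) \<le> 1 / (real i + 1)"
  obtains z where "\<And>i. z \<in> S i"
proof (rule decreasing_closed_nest[of S])
  show "S k \<subseteq> S m" if "m \<le> k" for m k
    using that by (induction k rule: dec_induct) (use nested in auto)
  fix \<epsilon> :: real assume "\<epsilon> > 0"
  then obtain i where i: "1 / (real i + 1) < \<epsilon>"
    by (metis nat_approx_posE of_nat_Suc add.commute)
  have "dist x y < \<epsilon>" if "x \<in> S i" "y \<in> S i" for x y
    using diameter_bounded_bound[OF bounded that] diam[of i] i by linarith
  then show "\<exists>i. \<forall>x\<in>S i. \<forall>y\<in>S i. dist x y < \<epsilon>" by blast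
qed (use closed nonempty in auto)

lemma convergent_along_Cauchy:
  fixes u :: "nat \<Rightarrow> real"
  assumes L: "infinite L" and conv: "convergent (\<lambda>k. u (enumerate L k))" and "e > 0"
  obtains N where "\<And>a b. a \<in> L \<Longrightarrow> b \<in> L \<Longrightarrow> N \<le> a \<Longrightarrow> N \<le> b \<Longrightarrow> \<bar>u a - u b\<bar> < e"
proof -
  have "Cauchy (\<lambda>k. u (enumerate L k))" using conv Cauchy_convergent_iff by blast
  then obtain M where M: "\<And>p q. M \<le> p \<Longrightarrow> M \<le> q \<Longrightarrow> \<bar>u (enumerate L p) - u (enumerate L q)\<bar> < e"
    using \<open>e > 0\<close> unfolding Cauchy_def dist_real_def by blast
  have "\<bar>u a - u b\<bar> < e"
    if ab: "a \<in> L" "b \<in> L" "enumerate L M \<le> a" "enumerate L M \<le> b" for a b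
  proof -
    obtain p q where p: "enumerate L p = a" and q: "enumerate L q = b"
      using enumerate_Ex[OF L ab(1)] enumerate_Ex[OF L ab(2)] by blast
    have "M \<le> p" "M \<le> q" using ab(3,4) p q L by (metis enumerate_mono not_le)+
    then show ?thesis using M p q by blast
  qed
  then show ?thesis using that by blast
qed

lemma nonconvergent_along_oscillates:
  fixes u :: "nat \<Rightarrow> real"
  assumes L: "infinite L" and nonconv: "\<not> convergent (\<lambda>k. u (enumerate L k))"
  obtains d :: nat
  where "\<And>N. \<exists>a\<in>L. \<exists>b\<in>L. N \<le> a \<and> a < b \<and> 1 / (real d + 1) < \<bar>u a - u b\<bar>"
proof -
  have "\<not> Cauchy (\<lambda>k. u (enumerate L k))" using nonconv Cauchy_convergent_iff by blast
  then obtain \<epsilon> :: real where "\<epsilon> > 0"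
    and \<epsilon>: "\<And>M. \<exists>p\<ge>M. \<exists>q\<ge>M. \<epsilon> \<le> \<bar>u (enumerate L p) - u (enumerate L q)\<bar>"
    unfolding Cauchy_def dist_real_def by (meson not_less)
  obtain d :: nat where d: "1 / (real d + 1) < \<epsilon>"
    using \<open>\<epsilon> > 0\<close> by (metis nat_approx_posE of_nat_Suc add.commute)
  have "\<exists>a\<in>L. \<exists>b\<in>L. N \<le> a \<and> a < b \<and> 1 / (real d + 1) < \<bar>u a - u b\<bar>" for N
  proof -
    obtain p q where "N \<le> p" "N \<le> q" and gap: "\<epsilon> \<le> \<bar>u (enumerate L p) - u (enumerate L q)\<bar>"
      using \<epsilon> by blast
    define p' q' where "p' = min p q" and "q' = max p q"
    have gap': "1 / (real d + 1) < \<bar>u (enumerate L p') - u (enumerate L q')\<bar>"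
      using gap d unfolding p'_def q'_def by (cases "p \<le> q") (auto simp: abs_minus_commute)
    have "p \<noteq> q" using gap \<open>\<epsilon> > 0\<close> by auto
    then have "p' < q'" unfolding p'_def q'_def by simp
    moreover have "N \<le> enumerate L p'"
      using \<open>N \<le> p\<close> \<open>N \<le> q\<close> le_enumerate[OF L, of p'] unfolding p'_def by linarith
    ultimately show ?thesis
      using gap' enumerate_in_set[OF L] enumerate_mono[OF _ L] by blast
  qed
  then show ?thesis using that by blast
qed

definition small_ball_basis :: "(nat \<Rightarrow> 'a::metric_space set) \<Rightarrow> bool" where
  "small_ball_basis B \<longleftrightarrow> (\<forall>x U \<delta>. open U \<longrightarrow> x \<in> U \<longrightarrow> \<delta> > 0 \<longrightarrow>
     (\<exists>j. x \<in> interior (B j) \<and> B j \<subseteq> U \<and> diameter (B j) \<le> \<delta>))"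

lemma rational_cballs_small_ball_basis:
  fixes D :: "'a::metric_space set"
  assumes dense: "closure D = UNIV"
    and balls: "{cball c r | c r. c \<in> D \<and> r \<in> \<rat> \<and> r > 0} \<subseteq> range B"
  shows "small_ball_basis B"
  unfolding small_ball_basis_def
proof (intro allI impI)
  fix x :: 'a and U and \<delta> :: real assume U: "open U" "x \<in> U" and "\<delta> > 0"
  obtain r0 where r0: "r0 > 0" "ball x r0 \<subseteq> U" using U open_contains_ball by blast
  define \<rho> where "\<rho> = min r0 \<delta> / 4"
  have "\<rho> > 0" using r0 \<open>\<delta> > 0\<close> unfolding \<rho>_def by simp
  obtain c where c: "c \<in> D" "dist c x < \<rho>"
    using dense \<open>\<rho> > 0\<close> closure_approachable[of x D] by blast
  obtain r where r: "r \<in> \<rat>" "\<rho> < r" "r < 2 * \<rho>"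
    using Rats_dense_in_real[of \<rho> "2 * \<rho>"] \<open>\<rho> > 0\<close> by auto
  have "cball c r \<in> range B" using balls c r \<open>\<rho> > 0\<close> by force
  then obtain j where j: "B j = cball c r" by auto
  have "x \<in> ball c r" using c r by (simp add: dist_commute)
  then have "x \<in> interior (B j)"
    unfolding j by (metis interior_mono interior_open ball_subset_cball open_ball subsetD)
  moreover have "B j \<subseteq> U"
  proof
    fix z assume "z \<in> B j"
    then have "dist x z < r0"
      using c r dist_triangle[of x z c] unfolding j \<rho>_def by (simp add: dist_commute) linarith
    then show "z \<in> U" using r0 by auto
  qed
  moreover have "diameter (B j) \<le> \<delta>"
  proof (rule diameter_le_metric)
    show "B j \<noteq> {}" using j r \<open>\<rho> > 0\<close> by auto
    fix y z assume "y \<in> B j" "z \<in> B j"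
    then have "dist y z \<le> 2 * r"
      using dist_triangle[of y z c] unfolding j by (simp add: dist_commute)
    then show "dist y z \<le> \<delta>" using r unfolding \<rho>_def by linarith
  qed
  ultimately show "\<exists>j. x \<in> interior (B j) \<and> B j \<subseteq> U \<and> diameter (B j) \<le> \<delta>" by blast
qed


lemma convergent_no_branch:
  fixes f :: "nat \<Rightarrow> 'a::complete_space \<Rightarrow> real"
  assumes balls: "\<And>j. \<exists>c r. B j = cball c r \<and> 0 \<le> r"
    and conv: "L \<in> conv_set f"
  shows "\<not> treeD_branch f B d L n F l"
proof
  assume "treeD_branch f B d L n F l"
  then have n: "strict_mono n" "\<And>i. n i \<in> L"
    and F: "\<And>i j. i < j \<Longrightarrow> fin_less (F i) (F j)" "\<And>i. F i \<subseteq> L"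
    and nested: "\<And>i. B (l (Suc i)) \<subseteq> B (l i)"
    and diam: "\<And>i. diameter (B (l i)) \<le> 1 / (real i + 1)"
    and sep: "\<And>i. \<forall>z \<in> B (l i). \<exists>m \<in> F i. 1 / (real d + 1) < \<bar>f (n i) z - f m z\<bar>"
    unfolding treeD_branch_def by auto
  obtain z where z: "\<And>i. z \<in> B (l i)"
  proof (rule nested_common_point[of "\<lambda>i. B (l i)"])
    show "closed (B (l i))" "bounded (B (l i))" for i
      using balls[of "l i"] by auto
    show "B (l i) \<noteq> {}" for i
      using balls[of "l i"] centre_in_cball by blast
  qed (use nested diam in auto)
  have "\<forall>i. \<exists>m. m \<in> F i \<and> 1 / (real d + 1) < \<bar>f (n i) z - f m z\<bar>"
    using sep z by blast
  then obtain m where m: "\<And>i. m i \<in> F i" "\<And>i. 1 / (real d + 1) < \<bar>f (n i) z - f (m i) z\<bar>"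
    by metis
  have "strict_mono m"
    by (rule strict_monoI) (use F(1) m(1) in \<open>auto simp: fin_less_def\<close>)
  obtain N where N: "\<And>a b. a \<in> L \<Longrightarrow> b \<in> L \<Longrightarrow> N \<le> a \<Longrightarrow> N \<le> b \<Longrightarrow>
      \<bar>f a z - f b z\<bar> < 1 / (real d + 1)"
    using conv convergent_along_Cauchy[of L "\<lambda>k. f k z" "1 / (real d + 1)"]
    unfolding conv_set_def by auto
  have "N \<le> n N" "N \<le> m N"
    using n(1) \<open>strict_mono m\<close> strict_mono_imp_increasing by blast+
  then have "\<bar>f (n N) z - f (m N) z\<bar> < 1 / (real d + 1)"
    using N n(2) F(2) m(1) by blast
  with m(2)[of N] show False by linarith
qed

(* If the f_n are continuous and (f_n)_{n in L} oscillates by more than 1/(d+1) at x,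
   then T^d_L has an infinite branch, built recursively with singleton blocks {b_i}
   and shrinking balls around x on which f_{a_i} and f_{b_i} stay separated. *)
lemma oscillation_branch:
  fixes f :: "nat \<Rightarrow> 'a::metric_space \<Rightarrow> real"
  assumes cont: "\<And>n. continuous_on UNIV (f n)" and basis: "small_ball_basis B"
    and osc: "\<And>N. \<exists>a\<in>L. \<exists>b\<in>L. N \<le> a \<and> a < b \<and> 1 / (real d + 1) < \<bar>f a x - f b x\<bar>"
  shows "\<exists>n F l. treeD_branch f B d L n F l"
proof -
  define e where "e = 1 / (real d + 1)"
  have sep_ball: "\<exists>a b j. a \<in> L \<and> b \<in> L \<and> N \<le> a \<and> a < b \<and> x \<in> interior (B j) \<and> B j \<subseteq> U \<and>
      diameter (B j) \<le> 1 / (real i + 1) \<and> (\<forall>z \<in> B j. e < \<bar>f a z - f b z\<bar>)"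
    if "open U" "x \<in> U" for N U i
  proof -
    obtain a b where ab: "a \<in> L" "b \<in> L" "N \<le> a" "a < b" "e < \<bar>f a x - f b x\<bar>"
      using osc unfolding e_def by blast
    define V where "V = U \<inter> {z. e < \<bar>f a z - f b z\<bar>}"
    have "open {z. e < \<bar>f a z - f b z\<bar>}"
      by (rule open_Collect_less) (auto intro!: continuous_intros cont)
    then have "open V" "x \<in> V" using that ab unfolding V_def by auto
    moreover have "1 / (real i + 1) > 0" by simp
    ultimately obtain j where "x \<in> interior (B j)" "B j \<subseteq> V" "diameter (B j) \<le> 1 / (real i + 1)"
      using basis unfolding small_ball_basis_def by blast
    then show ?thesis using ab unfolding V_def by blast
  qed
  define P where "P = (\<lambda>i (a, b, j). a \<in> L \<and> b \<in> L \<and> a < b \<and> x \<in> interior (B j) \<and>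
      diameter (B j) \<le> 1 / (real i + 1) \<and> (\<forall>z \<in> B j. e < \<bar>f a z - f b z\<bar>))"
  define Q where "Q = (\<lambda>(i::nat) (a::nat, b::nat, j) (a', b'::nat, j'). b < a' \<and> B j' \<subseteq> B j)"
  have "\<exists>t. P 0 t"
  proof -
    obtain a b j where "a \<in> L" "b \<in> L" "a < b" "x \<in> interior (B j)"
        "diameter (B j) \<le> 1 / (real 0 + 1)" "\<forall>z \<in> B j. e < \<bar>f a z - f b z\<bar>"
      using sep_ball[of UNIV 0 0] by blast
    then show ?thesis unfolding P_def by (intro exI[of _ "(a, b, j)"]) simp
  qed
  moreover have "\<exists>t'. P (Suc i) t' \<and> Q i t t'" if "P i t" for i t
  proof -
    obtain a b j where t: "t = (a, b, j)" by (cases t)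
    then have "x \<in> interior (B j)" using that unfolding P_def by auto
    then obtain a' b' j' where "a' \<in> L" "b' \<in> L" "Suc b \<le> a'" "a' < b'" "x \<in> interior (B j')"
        "B j' \<subseteq> interior (B j)" "diameter (B j') \<le> 1 / (real (Suc i) + 1)"
        "\<forall>z \<in> B j'. e < \<bar>f a' z - f b' z\<bar>"
      using sep_ball[of "interior (B j)" "Suc b" "Suc i"] by blast
    moreover have "B j' \<subseteq> B j" using calculation(6) interior_subset by blast
    ultimately show ?thesis
      unfolding P_def Q_def t by (intro exI[of _ "(a', b', j')"]) simp
  qed
  ultimately obtain g where g: "\<And>i. P i (g i)" "\<And>i. Q i (g i) (g (Suc i))"
    using dependent_nat_choice[of P Q] by blast
  define a b j where "a i = fst (g i)" and "b i = fst (snd (g i))" and "j i = snd (snd (g i))" for i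
  have g_eq: "g i = (a i, b i, j i)" for i unfolding a_def b_def j_def by simp
  have step: "a i \<in> L" "b i \<in> L" "a i < b i" "b i < a (Suc i)" "B (j (Suc i)) \<subseteq> B (j i)"
      "diameter (B (j i)) \<le> 1 / (real i + 1)"
      "\<forall>z \<in> B (j i). \<exists>m \<in> {b i}. 1 / (real d + 1) < \<bar>f (a i) z - f m z\<bar>" for i
    using g[of i] g[of "Suc i"] unfolding g_eq P_def Q_def e_def by auto
  have "range a \<subseteq> L" using step(1) by blast
  have "strict_mono a" "strict_mono b"
    by (rule strict_monoI_Suc; use step less_trans in blast)+
  moreover have "fin_less {b i} {b i'}" if "i < i'" for i i'
    using \<open>strict_mono b\<close> that unfolding fin_less_def strict_mono_def by simp
  ultimately have "treeD_branch f B d L a (\<lambda>i. {b i}) j"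
    unfolding treeD_branch_def using \<open>range a \<subseteq> L\<close> step(2,5,6,7) by blast
  then show ?thesis by blast
qed

theorem lemma5p10:
  fixes f :: "nat \<Rightarrow> 'a::polish_space \<Rightarrow> real"
    and D :: "'a set" and B :: "nat \<Rightarrow> 'a set" and L :: "nat set"
  assumes cont: "\<And>n. continuous_on UNIV (f n)"
    and rc: "rel_compact_B1 f"
    and D_countable: "countable D" and D_dense: "closure D = UNIV"
    and B_enum: "range B = {cball c r | c r. c \<in> D \<and> r \<in> \<rat> \<and> r > 0}"
    and L_inf: "infinite L"
  shows "L \<in> conv_set f \<longleftrightarrow> well_founded_tree (treeL f B L)"
proof
  assume conv: "L \<in> conv_set f"
  have balls: "\<exists>c r. B j = cball c r \<and> 0 \<le> r" for j
  proof -
    have "B j \<in> range B" by simp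
    then obtain c r where "B j = cball c r" "r > 0" unfolding B_enum by blast
    then show ?thesis by (intro exI[of _ c] exI[of _ r]) simp
  qed
  show "well_founded_tree (treeL f B L)"
    unfolding well_founded_treeL_iff using convergent_no_branch[where B = B, OF balls conv] by blast
next
  assume wf: "well_founded_tree (treeL f B L)"
  have basis: "small_ball_basis B"
    by (rule rational_cballs_small_ball_basis[OF D_dense]) (simp add: B_enum)
  have "convergent (\<lambda>k. f (enumerate L k) x)" for x
  proof (rule ccontr)
    assume "\<not> convergent (\<lambda>k. f (enumerate L k) x)"
    then obtain d where "\<And>N. \<exists>a\<in>L. \<exists>b\<in>L. N \<le> a \<and> a < b \<and> 1 / (real d + 1) < \<bar>f a x - f b x\<bar>"
      using nonconvergent_along_oscillates[of L "\<lambda>n. f n x"] L_inf by blast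
    then obtain n F l where "treeD_branch f B d L n F l"
      using oscillation_branch[where f = f, OF cont basis] by blast
    with wf show False unfolding well_founded_treeL_iff by blast
  qed
  then show "L \<in> conv_set f" using L_inf unfolding conv_set_def by blast
qed

end
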